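(* For $m\ge1$ define $\gamma_m\in S_{3m+2}$ by $$\gamma_m=3m+2,\ P_1,\ P_2,\ \dots,\ P_m,\ 2m+2,$$ where $P_i=2i,\ 3m+2-i,\ 2i-1$ for $1\le i\le m-1$ and $P_m=2m,\ 2m+1,\ 2m-1$ (so $\gamma_1=52314$, $\gamma_2=82714536$). Then: (1) $\gamma_i$ is a pattern of $\gamma_{i+1}$ for every $i\ge1$; (2) $\gamma_i$ is qlg-$2$-sortable if and only if $i$ is even.
   Context: The $\mathfrak{D}^2\mathfrak{I}$ machine consists of two decreasing stacks $D_1,D_2$ followed in series by an increasing stack $I$. Elements of $D_1,D_2$ must be in decreasing order from top to bottom (top largest); elements of $I$ in increasing order from top to bottom (top smallest). Operations: $d_0$ pushes the next input element into $D_1$; $d_1$ moves the top of $D_1$ to $D_2$; $d_2$ moves the top of $D_2$ to $I$; $d_3$ pops the top of $I$ and appends it to the output. An operation is legal if it respects the stack restrictions; $d_3$ is legal if the popped element is the smallest among the elements not yet output, and also if no other operation is legal. The quasi left-greedy procedure performs at each step the first legal operation in the priority order $d_3\rhd d_1\rhd d_0\rhd d_2$. A permutation is qlg-$2$-sortable if this procedure outputs its elements in increasing order. *)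

theory Defs
  imports Main
begin

text \<open>Permutations are lists of distinct naturals (one-line notation).
  A state of the machine is (input, D1, D2, I, output); stacks are lists with
  the head being the top.\<close>

type_synonym dstate = "nat list \<times> nat list \<times> nat list \<times> nat list \<times> nat list"

text \<open>One step of the quasi left-greedy procedure, priority d3 > d1 > d0 > d2,
  where d3 is also legal (forced) when no other operation is legal.\<close>

fun qlg_step :: "dstate \<Rightarrow> dstate" where
  "qlg_step (inp, d1, d2, st, out) =
    (if st \<noteq> [] \<and> hd st = Min (set inp \<union> set d1 \<union> set d2 \<union> set st)
     then (inp, d1, d2, tl st, out @ [hd st])
     else if d1 \<noteq> [] \<and> (d2 = [] \<or> hd d1 > hd d2)
     then (inp, tl d1, hd d1 # d2, st, out)
     else if inp \<noteq> [] \<and> (d1 = [] \<or> hd inp > hd d1)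
     then (tl inp, hd inp # d1, d2, st, out)
     else if d2 \<noteq> [] \<and> (st = [] \<or> hd d2 < hd st)
     then (inp, d1, tl d2, hd d2 # st, out)
     else if st \<noteq> []
     then (inp, d1, d2, tl st, out @ [hd st])
     else (inp, d1, d2, st, out))"

text \<open>Every operation moves one element one stage forward, so the procedure
  performs exactly 4n operations on a permutation of length n.\<close>

definition qlg_output :: "nat list \<Rightarrow> nat list" where
  "qlg_output p = (case (qlg_step ^^ (4 * length p)) (p, [], [], [], []) of
                     (_, _, _, _, out) \<Rightarrow> out)"

definition qlg_2_sortable :: "nat list \<Rightarrow> bool" where
  "qlg_2_sortable p \<longleftrightarrow> qlg_output p = sort p"

definition is_pattern :: "nat list \<Rightarrow> nat list \<Rightarrow> bool" where
  "is_pattern p q \<longleftrightarrow> (\<exists>f :: nat \<Rightarrow> nat.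
      strict_mono_on {..<length p} f \<and> (\<forall>i<length p. f i < length q) \<and>
      (\<forall>i<length p. \<forall>j<length p. (p ! i < p ! j) \<longleftrightarrow> (q ! f i < q ! f j)))"

definition gammaP :: "nat \<Rightarrow> nat \<Rightarrow> nat list" where
  "gammaP m i = (if i < m then [2*i, 3*m+2-i, 2*i-1] else [2*m, 2*m+1, 2*m-1])"

definition gamma :: "nat \<Rightarrow> nat list" where
  "gamma m = [3*m+2] @ concat (map (gammaP m) [1..<m+1]) @ [2*m+2]"

lemma "gamma 1 = [5,2,3,1,4]" "gamma 2 = [8,2,7,1,4,5,3,6]"
  by (simp_all add: gamma_def gammaP_def upt_rec)

end

theory Submission
  imports Defs "HOL-Library.Multiset" "HOL-Library.Sublist"
begin

text \<open>After an opening of 8 operations, the procedure on \<open>\<gamma>\<^sub>m\<close> enters a periodic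
  regime: every 12 operations it reads two blocks \<open>P\<^sub>2\<^sub>k\<^sub>+\<^sub>2, P\<^sub>2\<^sub>k\<^sub>+\<^sub>3\<close>, leaving the small
  odd values on \<open>D\<^sub>1\<close>, the small even values on \<open>D\<^sub>2\<close> and the large values in
  increasing order on \<open>I\<close>, and outputs nothing. What remains of the input when
  the regime ends depends on the parity of \<open>m\<close>. For even \<open>m\<close> it is \<open>P\<^sub>m, 2m+2\<close>
  (preceded by the last entry of \<open>P\<^sub>m\<^sub>-\<^sub>1\<close>), after which the stacks unwind in increasing
  order and the output is sorted. For odd \<open>m\<close> it is \<open>P\<^sub>m\<^sub>-\<^sub>1, P\<^sub>m, 2m+2\<close> (preceded by
  the last entry of \<open>P\<^sub>m\<^sub>-\<^sub>2\<close>); then no operation other than \<open>d\<^sub>3\<close> is legal while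
  \<open>2m+1\<close> is on top of \<open>I\<close> and \<open>1\<close> is still in \<open>D\<^sub>1\<close>, so \<open>2m+1\<close> is output first.

  Part (1) holds because \<open>\<gamma>\<^sub>m\<^sub>+\<^sub>1\<close> is \<open>\<gamma>\<^sub>m\<close>, shifted monotonically in value,
  with the block \<open>P\<^sub>1 = 2, 3m+4, 1\<close> inserted after its first entry.\<close>

definition dstate_mset :: "dstate \<Rightarrow> nat multiset" where
  "dstate_mset = (\<lambda>(inp, d1, d2, st, out). mset inp + mset d1 + mset d2 + mset st + mset out)"

definition dstate_output :: "dstate \<Rightarrow> nat list" where
  "dstate_output = (\<lambda>(_, _, _, _, out). out)"

lemma qlg_output_eq_dstate_output:
  "qlg_output p = dstate_output ((qlg_step ^^ (4 * length p)) (p, [], [], [], []))"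
  unfolding qlg_output_def dstate_output_def by (simp split: prod.split)

lemma dstate_mset_qlg_step: "dstate_mset (qlg_step s) = dstate_mset s"
proof -
  obtain inp d1 d2 st out where s: "s = (inp, d1, d2, st, out)" by (cases s) auto
  have pop: "\<And>l. l \<noteq> [] \<Longrightarrow> mset l = add_mset (hd l) (mset (tl l))" by (case_tac l) auto
  show ?thesis unfolding s qlg_step.simps dstate_mset_def
    by (auto simp: pop[of inp] pop[of d1] pop[of d2] pop[of st] split: if_splits)
qed

lemma dstate_mset_funpow_qlg_step: "dstate_mset ((qlg_step ^^ n) s) = dstate_mset s"
  by (induction n) (simp_all add: dstate_mset_qlg_step)

lemma prefix_dstate_output_qlg_step: "prefix (dstate_output s) (dstate_output (qlg_step s))"
  by (cases s) (auto simp: dstate_output_def)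

lemma prefix_dstate_output_funpow_qlg_step:
  "prefix (dstate_output s) (dstate_output ((qlg_step ^^ n) s))"
  by (induction n) (auto intro: prefix_order.trans prefix_dstate_output_qlg_step)

lemma qlg_step_empty_I:
  "qlg_step (inp, d1, d2, [], out) =
    (if d1 \<noteq> [] \<and> (d2 = [] \<or> hd d1 > hd d2) then (inp, tl d1, hd d1 # d2, [], out)
     else if inp \<noteq> [] \<and> (d1 = [] \<or> hd inp > hd d1) then (tl inp, hd inp # d1, d2, [], out)
     else if d2 \<noteq> [] then (inp, d1, tl d2, [hd d2], out)
     else (inp, d1, d2, [], out))"
  by simp

lemma qlg_step_top_not_min:
  assumes "\<exists>y \<in> set inp \<union> set d1 \<union> set d2. y < s"
  shows "qlg_step (inp, d1, d2, s # st, out) =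
    (if d1 \<noteq> [] \<and> (d2 = [] \<or> hd d1 > hd d2) then (inp, tl d1, hd d1 # d2, s # st, out)
     else if inp \<noteq> [] \<and> (d1 = [] \<or> hd inp > hd d1) then (tl inp, hd inp # d1, d2, s # st, out)
     else if d2 \<noteq> [] \<and> hd d2 < s then (inp, d1, tl d2, hd d2 # s # st, out)
     else (inp, d1, d2, st, out @ [s]))"
proof -
  obtain y where y: "y \<in> set inp \<union> set d1 \<union> set d2" "y < s" using assms by blast
  have "Min (set inp \<union> set d1 \<union> set d2 \<union> set (s # st)) \<le> y"
    using y by (intro Min_le) auto
  then have "s \<noteq> Min (set inp \<union> set d1 \<union> set d2 \<union> set (s # st))" using y(2) by linarith
  then show ?thesis by simp
qed

lemma qlg_step_pop_interval:
  assumes "a < b"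
  shows "qlg_step ([], [], [], [a..<b], out) = ([], [], [], [Suc a..<b], out @ [a])"
proof -
  have "Min (set [] \<union> set [] \<union> set [] \<union> set [a..<b]) = a"
    using assms by (intro Min_eqI) auto
  then show ?thesis using assms by (simp add: upt_conv_Cons)
qed

lemma funpow_qlg_step_pop_interval:
  "(qlg_step ^^ n) ([], [], [], [a..<a+n], out) = ([], [], [], [], out @ [a..<a+n])"
proof (induction n arbitrary: a out)
  case 0
  then show ?case by simp
next
  case (Suc n)
  have "(qlg_step ^^ Suc n) ([], [], [], [a..<a + Suc n], out)
      = (qlg_step ^^ n) ([], [], [], [Suc a..<Suc a + n], out @ [a])"
    by (simp add: funpow_Suc_right qlg_step_pop_interval del: funpow.simps upt.simps)
  also have "\<dots> = ([], [], [], [], out @ [a] @ [Suc a..<Suc a + n])"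
    using Suc.IH[of "Suc a" "out @ [a]"] by (simp del: upt.simps)
  also have "out @ [a] @ [Suc a..<Suc a + n] = out @ [a..<a + Suc n]"
    by (simp add: upt_conv_Cons)
  finally show ?case .
qed

section \<open>Runs of the procedure on fixed input shapes\<close>

lemma qlg_opening:
  assumes "3 \<le> c"
  shows "(qlg_step ^^ 8) ((c+1) # 2 # c # 1 # r, [], [], [], out) = (1 # r, [], [2], [c, c+1], out)"
  using assms by (auto simp del: qlg_step.simps simp add: qlg_step_empty_I qlg_step_top_not_min numeral_eq_Suc)

lemma qlg_two_blocks:
  assumes "4*k+7 \<le> c" "D = [] \<or> hd D < 4*k+1"
  shows "(qlg_step ^^ 12) ([4*k+1, 4*k+4, c+1, 4*k+3, 4*k+6, c, 4*k+5] @ r, D, (4*k+2) # E, (c+2) # S, out)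
    = ((4*k+5) # r, (4*k+3) # (4*k+1) # D, (4*k+6) # (4*k+4) # (4*k+2) # E, c # (c+1) # (c+2) # S, out)"
  using assms
  by (cases D) (auto simp del: qlg_step.simps simp add: qlg_step_empty_I qlg_step_top_not_min numeral_eq_Suc)

lemma qlg_even_ending:
  assumes "D = [] \<or> hd D < 4*k+1"
  shows "(qlg_step ^^ 11) ([4*k+1, 4*k+4, 4*k+5, 4*k+3, 4*k+6], D, (4*k+2) # E, (4*k+7) # S, out)
    = ([], (4*k+3) # (4*k+1) # D, (4*k+2) # E, (4*k+4) # (4*k+5) # (4*k+6) # (4*k+7) # S, out)"
  using assms
  by (cases D) (auto simp del: qlg_step.simps simp add: qlg_step_empty_I qlg_step_top_not_min numeral_eq_Suc)

lemma qlg_odd_ending: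
  assumes "D = [] \<or> hd D < 4*k+1"
  shows "(qlg_step ^^ 16) ([4*k+1, 4*k+4, 4*k+9, 4*k+3, 4*k+6, 4*k+7, 4*k+5, 4*k+8], D, (4*k+2) # E, (4*k+10) # S, out)
    = ([], (4*k+5) # (4*k+3) # (4*k+1) # D, (4*k+8) # (4*k+6) # (4*k+4) # (4*k+2) # E,
       (4*k+9) # (4*k+10) # S, out @ [4*k+7])"
  using assms
  by (cases D) (auto simp del: qlg_step.simps simp add: qlg_step_empty_I qlg_step_top_not_min numeral_eq_Suc)

lemma qlg_unwind_pair:
  "(qlg_step ^^ 3) ([], (2*j+3) # (2*j+1) # D, (2*j+2) # E, (2*j+4) # S, out)
    = ([], (2*j+1) # D, E, (2*j+2) # (2*j+3) # (2*j+4) # S, out)"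
  by (auto simp del: qlg_step.simps simp add: qlg_step_empty_I qlg_step_top_not_min numeral_eq_Suc)

lemma qlg_unwind_last:
  assumes "2 < M"
  shows "(qlg_step ^^ 2) ([], [1], [], [2..<M], out) = ([], [], [], [1..<M], out)"
proof -
  have "(qlg_step ^^ 2) ([], [1], [], 2 # S, out) = ([], [], [], 1 # 2 # S, out)" for S
    by (auto simp del: qlg_step.simps simp add: qlg_step_empty_I qlg_step_top_not_min numeral_eq_Suc)
  moreover have "[2..<M] = 2 # [3..<M]" "[1..<M] = 1 # 2 # [3..<M]"
    using assms by (simp_all add: upt_conv_Cons numeral_eq_Suc)
  ultimately show ?thesis by simp
qed

section \<open>The periodic regime on \<open>\<gamma>\<^sub>m\<close>\<close>

definition desc_odds :: "nat \<Rightarrow> nat list" where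
  "desc_odds j = rev (map (\<lambda>i. 2*i+1) [0..<j])"

definition desc_evens :: "nat \<Rightarrow> nat list" where
  "desc_evens j = rev (map (\<lambda>i. 2*i+2) [0..<j])"

lemma desc_odds_simps [simp]: "desc_odds 0 = []" "desc_odds (Suc j) = (2*j+1) # desc_odds j"
  by (simp_all add: desc_odds_def)

lemma desc_evens_simps [simp]: "desc_evens 0 = []" "desc_evens (Suc j) = (2*j+2) # desc_evens j"
  by (simp_all add: desc_evens_def)

lemma desc_odds_hd_less: "desc_odds (2*k) = [] \<or> hd (desc_odds (2*k)) < 4*k+1"
  by (cases k) auto

text \<open>The state in which everything up to, but excluding, the last entry \<open>4k+1\<close> of
  \<open>P\<^sub>2\<^sub>k\<^sub>+\<^sub>1\<close> has been read.\<close>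

definition regime_state :: "nat \<Rightarrow> nat \<Rightarrow> dstate" where
  "regime_state m k =
    ((4*k+1) # concat (map (gammaP m) [2*k+2..<m+1]) @ [2*m+2],
     desc_odds (2*k), desc_evens (2*k+1), [3*m+1-2*k..<3*m+3], [])"

lemma qlg_reaches_regime_0:
  assumes "2 \<le> m"
  shows "(qlg_step ^^ 8) (gamma m, [], [], [], []) = regime_state m 0"
proof -
  have "gamma m = ((3*m+1)+1) # 2 # (3*m+1) # 1 # (concat (map (gammaP m) [2..<m+1]) @ [2*m+2])"
    using assms by (simp add: gamma_def upt_conv_Cons gammaP_def numeral_eq_Suc)
  then show ?thesis using qlg_opening[of "3*m+1"] assms
    by (simp add: regime_state_def upt_conv_Cons numeral_2_eq_2 del: funpow.simps)
qed

lemma qlg_regime_step: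
  assumes "2*k+4 \<le> m"
  shows "(qlg_step ^^ 12) (regime_state m k) = regime_state m (Suc k)"
proof -
  define c where "c = 3*m-1-2*k"
  have c: "4*k+7 \<le> c" using assms unfolding c_def by linarith
  have blocks: "concat (map (gammaP m) [2*k+2..<m+1])
      = [4*k+4, c+1, 4*k+3, 4*k+6, c, 4*k+5] @ concat (map (gammaP m) [2*k+4..<m+1])"
    using assms by (simp add: upt_conv_Cons numeral_eq_Suc c_def gammaP_def)
  have I_top: "3*m+1-2*k = c+2" "3*m+1-2*Suc k = c" "c+2 < 3*m+3"
    using assms unfolding c_def by presburger+
  have "regime_state m k = ([4*k+1, 4*k+4, c+1, 4*k+3, 4*k+6, c, 4*k+5]
      @ (concat (map (gammaP m) [2*k+4..<m+1]) @ [2*m+2]),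
      desc_odds (2*k), (4*k+2) # desc_evens (2*k), (c+2) # [c+3..<3*m+3], [])"
    unfolding regime_state_def blocks I_top(1) using I_top(3) by (simp add: upt_conv_Cons numeral_eq_Suc)
  moreover have "regime_state m (Suc k) = ((4*k+5) # (concat (map (gammaP m) [2*k+4..<m+1]) @ [2*m+2]),
      (4*k+3) # (4*k+1) # desc_odds (2*k), (4*k+6) # (4*k+4) # (4*k+2) # desc_evens (2*k),
      c # (c+1) # (c+2) # [c+3..<3*m+3], [])"
    unfolding regime_state_def I_top(2) using I_top(3) by (simp add: upt_conv_Cons numeral_eq_Suc)
  ultimately show ?thesis by (simp only: qlg_two_blocks[OF c desc_odds_hd_less])
qed

lemma qlg_reaches_regime:
  "2*k+2 \<le> m \<Longrightarrow> (qlg_step ^^ (12*k+8)) (gamma m, [], [], [], []) = regime_state m k"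
proof (induction k)
  case 0
  then show ?case using qlg_reaches_regime_0 by simp
next
  case (Suc k)
  have "12*Suc k + 8 = 12 + (12*k+8)" by simp
  then have "(qlg_step ^^ (12*Suc k+8)) (gamma m, [], [], [], [])
      = (qlg_step ^^ 12) ((qlg_step ^^ (12*k+8)) (gamma m, [], [], [], []))"
    by (simp only: funpow_add comp_def)
  also have "\<dots> = regime_state m (Suc k)" using Suc qlg_regime_step by simp
  finally show ?case .
qed

lemma qlg_unwind:
  "2*j+2 < M \<Longrightarrow> (qlg_step ^^ (3*j)) ([], desc_odds (Suc j), desc_evens j, [2*j+2..<M], out)
    = ([], [1], [], [2..<M], out)"
proof (induction j)
  case 0
  then show ?case by (simp add: numeral_2_eq_2)
next
  case (Suc j)
  have I_before: "[2*Suc j+2..<M] = (2*j+4) # [Suc (2*j+4)..<M]"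
    using Suc.prems by (simp add: upt_conv_Cons numeral_eq_Suc)
  have I_after: "(2*j+2) # (2*j+3) # (2*j+4) # [Suc (2*j+4)..<M] = [2*j+2..<M]"
    using Suc.prems by (simp add: upt_conv_Cons numeral_eq_Suc)
  have "3*Suc j = 3*j+3" by simp
  then have "(qlg_step ^^ (3*Suc j)) ([], desc_odds (Suc (Suc j)), desc_evens (Suc j), [2*Suc j+2..<M], out)
      = (qlg_step ^^ (3*j)) ((qlg_step ^^ 3)
          ([], (2*j+3) # (2*j+1) # desc_odds j, (2*j+2) # desc_evens j, (2*j+4) # [Suc (2*j+4)..<M], out))"
    unfolding I_before by (simp only: funpow_add comp_def desc_odds_simps desc_evens_simps)
      (simp add: algebra_simps numeral_eq_Suc)
  also have "\<dots> = (qlg_step ^^ (3*j)) ([], desc_odds (Suc j), desc_evens j, [2*j+2..<M], out)"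
    unfolding qlg_unwind_pair I_after by simp
  also have "\<dots> = ([], [1], [], [2..<M], out)" using Suc by simp
  finally show ?case .
qed

section \<open>Sortability of \<open>\<gamma>\<^sub>m\<close>\<close>

lemma length_gamma: "length (gamma m) = 3*m+2"
proof -
  have "length (concat (map (gammaP m) xs)) = 3 * length xs" for xs
    by (induction xs) (auto simp: gammaP_def)
  then show ?thesis by (simp add: gamma_def)
qed

lemma qlg_run_gamma_even:
  "(qlg_step ^^ (4 * length (gamma (2*k+2)))) (gamma (2*k+2), [], [], [], []) = ([], [], [], [], [1..<6*k+9])"
proof -
  define m where "m = 2*k+2"
  have "4 * length (gamma m) = (6*k+8) + (2 + (3*(2*k+1) + (11 + (12*k+8))))"
    unfolding m_def length_gamma by simp
  then have "(qlg_step ^^ (4 * length (gamma m))) (gamma m, [], [], [], []) =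
      (qlg_step ^^ (6*k+8)) ((qlg_step ^^ 2) ((qlg_step ^^ (3*(2*k+1)))
        ((qlg_step ^^ 11) ((qlg_step ^^ (12*k+8)) (gamma m, [], [], [], [])))))"
    by (simp only: funpow_add comp_def)
  also have "(qlg_step ^^ (12*k+8)) (gamma m, [], [], [], []) = regime_state m k"
    by (rule qlg_reaches_regime) (simp add: m_def)
  also have "regime_state m k =
      ([4*k+1, 4*k+4, 4*k+5, 4*k+3, 4*k+6], desc_odds (2*k), (4*k+2) # desc_evens (2*k),
       (4*k+7) # [4*k+8..<6*k+9], [])"
    unfolding regime_state_def m_def by (simp add: gammaP_def upt_conv_Cons add.commute)
  also have "(qlg_step ^^ 11) \<dots> = ([], (4*k+3) # (4*k+1) # desc_odds (2*k), (4*k+2) # desc_evens (2*k),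
      (4*k+4) # (4*k+5) # (4*k+6) # (4*k+7) # [4*k+8..<6*k+9], [])"
    by (rule qlg_even_ending[OF desc_odds_hd_less])
  also have "\<dots> = ([], desc_odds (Suc (2*k+1)), desc_evens (2*k+1), [2*(2*k+1)+2..<6*k+9], [])"
    by (simp add: upt_conv_Cons numeral_eq_Suc add.assoc)
  also have "(qlg_step ^^ (3*(2*k+1))) \<dots> = ([], [1], [], [2..<6*k+9], [])"
    by (rule qlg_unwind) simp
  also have "(qlg_step ^^ 2) \<dots> = ([], [], [], [1..<6*k+9], [])"
    by (rule qlg_unwind_last) simp
  also have "(qlg_step ^^ (6*k+8)) \<dots> = ([], [], [], [], [1..<6*k+9])"
    using funpow_qlg_step_pop_interval[of "6*k+8" 1 "[]"] by (simp add: add.commute)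
  finally show ?thesis by (simp add: m_def add.commute)
qed

lemma qlg_2_sortable_gamma_even: "qlg_2_sortable (gamma (2*k+2))"
proof -
  have "mset (gamma (2*k+2)) = mset [1..<6*k+9]"
    using dstate_mset_funpow_qlg_step[of "4 * length (gamma (2*k+2))" "(gamma (2*k+2), [], [], [], [])"]
    unfolding qlg_run_gamma_even dstate_mset_def by simp
  then have "sort (gamma (2*k+2)) = [1..<6*k+9]" by (intro properties_for_sort) auto
  then show ?thesis
    unfolding qlg_2_sortable_def qlg_output_eq_dstate_output qlg_run_gamma_even
    by (simp add: dstate_output_def)
qed

lemma not_qlg_2_sortable_gamma_odd: "\<not> qlg_2_sortable (gamma (2*k+3))"
proof
  define m where "m = 2*k+3"
  assume "qlg_2_sortable (gamma (2*k+3))"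
  then have sorted_output: "qlg_output (gamma m) = sort (gamma m)"
    unfolding qlg_2_sortable_def m_def .
  have "4 * length (gamma m) = (12*k+20) + (16 + (12*k+8))"
    unfolding m_def length_gamma by simp
  then have "(qlg_step ^^ (4 * length (gamma m))) (gamma m, [], [], [], []) =
      (qlg_step ^^ (12*k+20)) ((qlg_step ^^ 16) ((qlg_step ^^ (12*k+8)) (gamma m, [], [], [], [])))"
    by (simp only: funpow_add comp_def)
  also have "(qlg_step ^^ (12*k+8)) (gamma m, [], [], [], []) = regime_state m k"
    by (rule qlg_reaches_regime) (simp add: m_def)
  also have "regime_state m k =
      ([4*k+1, 4*k+4, 4*k+9, 4*k+3, 4*k+6, 4*k+7, 4*k+5, 4*k+8], desc_odds (2*k),
       (4*k+2) # desc_evens (2*k), (4*k+10) # [4*k+11..<6*k+12], [])"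
    unfolding regime_state_def m_def by (simp add: gammaP_def upt_conv_Cons add.commute)
  also have "(qlg_step ^^ 16) \<dots> = ([], (4*k+5) # (4*k+3) # (4*k+1) # desc_odds (2*k),
      (4*k+8) # (4*k+6) # (4*k+4) # (4*k+2) # desc_evens (2*k),
      (4*k+9) # (4*k+10) # [4*k+11..<6*k+12], [] @ [4*k+7])"
    by (rule qlg_odd_ending[OF desc_odds_hd_less])
  finally have "prefix [4*k+7] (qlg_output (gamma m))"
    using prefix_dstate_output_funpow_qlg_step
    by (metis dstate_output_def qlg_output_eq_dstate_output append_Nil case_prod_conv)
  then obtain zs where "sort (gamma m) = (4*k+7) # zs"
    using sorted_output by (auto simp: prefix_def)
  moreover have "1 \<in> set (gamma m)"
    unfolding m_def gamma_def by (force simp: gammaP_def)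
  then have "1 \<in> set (sort (gamma m))" by simp
  ultimately show False using sorted_sort[of "gamma m"] by auto
qed

lemma not_qlg_2_sortable_gamma_1: "\<not> qlg_2_sortable (gamma 1)"
proof -
  have "gamma 1 = [5, 2, 3, 1, 4]" by (simp add: gamma_def gammaP_def)
  moreover have "qlg_output [5, 2, 3, 1, 4] = [3, 1, 2, 4, 5]" by code_simp
  ultimately show ?thesis by (simp add: qlg_2_sortable_def)
qed

section \<open>\<open>\<gamma>\<^sub>m\<close> is a pattern of \<open>\<gamma>\<^sub>m\<^sub>+\<^sub>1\<close>\<close>

lemma is_pattern_insert_after_hd:
  assumes "p \<noteq> []" "strict_mono g"
  shows "is_pattern p (g (hd p) # xs @ tl (map g p))"
  unfolding is_pattern_def
proof (intro exI[of _ "\<lambda>i. if i = 0 then 0 else i + length xs"] conjI allI impI)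
  let ?q = "g (hd p) # xs @ tl (map g p)"
  let ?f = "\<lambda>i. if i = 0 then 0 else i + length xs"
  show "strict_mono_on {..<length p} ?f"
    by (auto simp: strict_mono_on_def)
  have q_at_f: "?q ! ?f i = g (p ! i)" if "i < length p" for i
    using that assms(1) by (cases i) (auto simp: hd_conv_nth nth_append nth_tl)
  fix i assume i: "i < length p"
  show "?f i < length ?q" using i assms(1) by simp
  fix j assume j: "j < length p"
  show "(p ! i < p ! j) = (?q ! ?f i < ?q ! ?f j)"
    unfolding q_at_f[OF i] q_at_f[OF j] using assms(2) by (simp add: strict_mono_less)
qed

definition gamma_shift :: "nat \<Rightarrow> nat \<Rightarrow> nat" where
  "gamma_shift m x = (if 3*m+2 \<le> x then x+3 else x+2)"

lemma strict_mono_gamma_shift: "strict_mono (gamma_shift m)"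
  by (auto simp: strict_mono_def gamma_shift_def)

lemma map_gamma_shift_gammaP:
  assumes "1 \<le> i" "i \<le> m"
  shows "map (gamma_shift m) (gammaP m i) = gammaP (Suc m) (Suc i)"
  using assms by (auto simp: gamma_shift_def gammaP_def)

lemma gamma_Suc:
  assumes "1 \<le> m"
  shows "gamma (Suc m) = gamma_shift m (hd (gamma m)) # gammaP (Suc m) 1 @ tl (map (gamma_shift m) (gamma m))"
proof -
  have "map (gamma_shift m) (concat (map (gammaP m) [1..<m+1]))
      = concat (map (\<lambda>i. gammaP (Suc m) (Suc i)) [1..<m+1])"
    unfolding map_concat map_map comp_def
    by (intro arg_cong[where f = concat] map_cong) (auto simp: map_gamma_shift_gammaP)
  also have "\<dots> = concat (map (gammaP (Suc m)) [2..<Suc m+1])"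
    by (simp only: map_Suc_upt[of 1 "m+1"] map_map[symmetric] comp_def[symmetric])
       (simp add: numeral_2_eq_2)
  finally have "map (gamma_shift m) (concat (map (gammaP m) [1..<m+1]))
      = concat (map (gammaP (Suc m)) [2..<Suc m+1])" .
  moreover have "[1..<Suc m+1] = 1 # [2..<Suc m+1]"
    by (simp add: upt_conv_Cons numeral_2_eq_2)
  ultimately show ?thesis
    using assms by (simp add: gamma_def gamma_shift_def del: upt_Suc)
qed

lemma is_pattern_gamma_Suc:
  assumes "1 \<le> m"
  shows "is_pattern (gamma m) (gamma (Suc m))"
  unfolding gamma_Suc[OF assms]
  by (rule is_pattern_insert_after_hd[OF _ strict_mono_gamma_shift]) (simp add: gamma_def)

theorem mainTheorem14:
  shows "(\<forall>i\<ge>1. is_pattern (gamma i) (gamma (Suc i))) \<and>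
         (\<forall>i\<ge>1. qlg_2_sortable (gamma i) \<longleftrightarrow> even i)"
proof (intro conjI allI impI)
  fix i :: nat
  assume "1 \<le> i"
  then show "is_pattern (gamma i) (gamma (Suc i))" by (rule is_pattern_gamma_Suc)
next
  fix i :: nat
  assume i: "1 \<le> i"
  have "(\<exists>k. i = 2*k+2) \<or> i = 1 \<or> (\<exists>k. i = 2*k+3)" using i by presburger
  then consider k where "i = 2*k+2" | "i = 1" | k where "i = 2*k+3" by blast
  then show "qlg_2_sortable (gamma i) \<longleftrightarrow> even i"
  proof cases
    case (1 k)
    then show ?thesis using qlg_2_sortable_gamma_even[of k] by simp
  next
    case 2
    then show ?thesis using not_qlg_2_sortable_gamma_1 by simp
  next
    case (3 k)
    then show ?thesis using not_qlg_2_sortable_gamma_odd[of k] by simp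
  qed
qed

end
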